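(* Let $n \geq 1$, let $\mathbb{K}$ be a field and $S=\mathbb{K}[x_1,\dots,x_n]$. Let $M_n^{(1)} \subset S$ be the ideal \[M_n^{(1)}=\langle x_i^{\,n} : 1\le i\le n\rangle+\langle x_i^{\,n-1}x_j^{\,n-1} : 1\le i<j\le n\rangle .\] Then the number of standard monomials of $M_n^{(1)}$ (monomials of $S$ divisible by no generator), equivalently $\dim_{\mathbb{K}} S/M_n^{(1)}$, equals \[(2n-1)(n-1)^{n-1}\] (with the convention $0^0=1$).
   Context: The ideal $M_n^{(1)}$ is the $1$-skeleton ideal of the complete graph $K_{n+1}$ on vertex set $\{0,1,\dots,n\}$ with sink $0$: for a graph $G$ on $\{0,1,\dots,n\}$ and nonempty $\sigma\subseteq[n]=\{1,\dots,n\}$ one sets $m_\sigma=\prod_{i\in\sigma}x_i^{\mathrm{outdeg}_\sigma(i)}$, where $\mathrm{outdeg}_\sigma(i)$ is the number of vertices of $G$ not in $\sigma$ adjacent to $i$, and $M_G^{(1)}=\langle m_\sigma : \emptyset\ne\sigma\subseteq[n],\ |\sigma|\le 2\rangle$. For $G=K_{n+1}$ this gives the generators displayed in the claim. *)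

theory Defs
  imports Main
begin

text \<open>A monomial x_1^(a 1) ... x_n^(a n) of S = K[x_1,...,x_n] is represented by its
exponent vector a :: nat \<Rightarrow> nat, which vanishes outside {1..n}.\<close>

definition monomials :: "nat \<Rightarrow> (nat \<Rightarrow> nat) set" where
  "monomials n = {a. \<forall>i. i \<notin> {1..n} \<longrightarrow> a i = 0}"

definition mon_dvd :: "(nat \<Rightarrow> nat) \<Rightarrow> (nat \<Rightarrow> nat) \<Rightarrow> bool" where
  "mon_dvd g a \<longleftrightarrow> (\<forall>i. g i \<le> a i)"

definition xpow :: "nat \<Rightarrow> nat \<Rightarrow> (nat \<Rightarrow> nat)" where
  "xpow i k = (\<lambda>l. if l = i then k else 0)"

definition M1_gens :: "nat \<Rightarrow> (nat \<Rightarrow> nat) set" where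
  "M1_gens n = {xpow i n | i. i \<in> {1..n}}
     \<union> {(\<lambda>l. xpow i (n - 1) l + xpow j (n - 1) l) | i j. 1 \<le> i \<and> i < j \<and> j \<le> n}"

definition standard_monomials :: "nat \<Rightarrow> (nat \<Rightarrow> nat) set \<Rightarrow> (nat \<Rightarrow> nat) set" where
  "standard_monomials n G = {a \<in> monomials n. \<forall>g\<in>G. \<not> mon_dvd g a}"

end

theory Submission
  imports Defs "HOL-Library.FuncSet"
begin

text \<open>A monomial is standard iff all its exponents are at most n - 1 and at most one of them
  equals n - 1. With m = n - 1, such vectors either have all entries below m, which gives
  m ^ n of them, or have a single entry m at some i and entries below m elsewhere, which gives
  m ^ (n - 1) for each of the n choices of i. Hence m ^ n + n m ^ (n - 1) = (2n - 1) m ^ (n - 1).\<close>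

definition vectors_below :: "nat set \<Rightarrow> nat \<Rightarrow> (nat \<Rightarrow> nat) set" where
  "vectors_below I m = {a. (\<forall>i. i \<notin> I \<longrightarrow> a i = 0) \<and> (\<forall>i\<in>I. a i < m)}"

definition vectors_unique_top :: "nat set \<Rightarrow> nat \<Rightarrow> (nat \<Rightarrow> nat) set" where
  "vectors_unique_top I m = {a. (\<forall>i. i \<notin> I \<longrightarrow> a i = 0) \<and> (\<forall>i\<in>I. a i \<le> m)
      \<and> (\<forall>i\<in>I. \<forall>j\<in>I. a i = m \<and> a j = m \<longrightarrow> i = j)}"

lemma bij_betw_vectors_below_PiE:
  "bij_betw (\<lambda>a. restrict a I) (vectors_below I m) (\<Pi>\<^sub>E i\<in>I. {..<m})"
  by (rule bij_betw_byWitness[where f' = "\<lambda>f i. if i \<in> I then f i else 0"])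
     (auto simp: vectors_below_def fun_eq_iff PiE_iff extensional_def)

lemma finite_card_vectors_below:
  assumes "finite I"
  shows "finite (vectors_below I m) \<and> card (vectors_below I m) = m ^ card I"
proof -
  have "finite (\<Pi>\<^sub>E i\<in>I. {..<m}) \<and> card (\<Pi>\<^sub>E i\<in>I. {..<m}) = m ^ card I"
    using assms by (simp add: finite_PiE card_PiE)
  then show ?thesis
    using bij_betw_vectors_below_PiE bij_betw_finite bij_betw_same_card by metis
qed

lemma vectors_unique_top_split:
  "vectors_unique_top I m = vectors_below I m \<union> (\<Union>i\<in>I. (\<lambda>b. b(i := m)) ` vectors_below (I - {i}) m)"
proof (intro equalityI subsetI)
  fix a assume a: "a \<in> vectors_unique_top I m"
  show "a \<in> vectors_below I m \<union> (\<Union>i\<in>I. (\<lambda>b. b(i := m)) ` vectors_below (I - {i}) m)"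
  proof (cases "\<exists>i\<in>I. a i = m")
    case True
    then obtain i where "i \<in> I" "a i = m" by blast
    with a have "a(i := 0) \<in> vectors_below (I - {i}) m" "a = (a(i := 0))(i := m)"
      by (auto simp: vectors_unique_top_def vectors_below_def order.order_iff_strict)
    with \<open>i \<in> I\<close> show ?thesis by blast
  next
    case False
    with a show ?thesis by (auto simp: vectors_unique_top_def vectors_below_def order.order_iff_strict)
  qed
next
  fix a assume "a \<in> vectors_below I m \<union> (\<Union>i\<in>I. (\<lambda>b. b(i := m)) ` vectors_below (I - {i}) m)"
  then show "a \<in> vectors_unique_top I m"
  proof (elim UnE UN_E imageE)
    fix i b assume "i \<in> I" "b \<in> vectors_below (I - {i}) m" "a = b(i := m)"
    then show ?thesis
      by (auto simp: vectors_unique_top_def vectors_below_def less_imp_le)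
  qed (auto simp: vectors_unique_top_def vectors_below_def)
qed

lemma finite_card_vectors_unique_top:
  assumes "finite I"
  shows "finite (vectors_unique_top I m)
    \<and> card (vectors_unique_top I m) = m ^ card I + card I * m ^ (card I - 1)"
proof -
  let ?peak = "\<lambda>i. (\<lambda>b. b(i := m)) ` vectors_below (I - {i}) m"
  have card_peak: "finite (?peak i) \<and> card (?peak i) = m ^ (card I - 1)" if "i \<in> I" for i
  proof -
    have "inj_on (\<lambda>b. b(i := m)) (vectors_below (I - {i}) m)"
    proof (rule inj_onI)
      fix b c assume "b \<in> vectors_below (I - {i}) m" "c \<in> vectors_below (I - {i}) m"
        and eq: "b(i := m) = c(i := m)"
      then have "b i = 0" "c i = 0" by (simp_all add: vectors_below_def)
      then have "b = (b(i := m))(i := 0)" "c = (c(i := m))(i := 0)" by auto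
      with eq show "b = c" by simp
    qed
    then show ?thesis
      using finite_card_vectors_below[of "I - {i}" m] assms that by (simp add: card_image)
  qed
  have peaks_disjoint: "?peak i \<inter> ?peak j = {}" if "i \<in> I" "i \<noteq> j" for i j
  proof (rule equals0I)
    fix a assume "a \<in> ?peak i \<inter> ?peak j"
    then obtain b c where "a = b(i := m)" and a_c: "a = c(j := m)"
      and c: "c \<in> vectors_below (I - {j}) m"
      by blast
    then have "a i = m" by simp
    moreover have "a i < m"
      using a_c c that by (simp add: vectors_below_def)
    ultimately show False by simp
  qed
  have below_peak_disjoint: "vectors_below I m \<inter> (\<Union>i\<in>I. ?peak i) = {}"
    by (auto simp: vectors_below_def)
  have peaks: "finite (\<Union>i\<in>I. ?peak i)" "card (\<Union>i\<in>I. ?peak i) = card I * m ^ (card I - 1)"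
    using assms card_peak peaks_disjoint by (simp_all add: card_UN_disjoint)
  have below: "finite (vectors_below I m)" "card (vectors_below I m) = m ^ card I"
    using finite_card_vectors_below[OF assms] by simp_all
  show ?thesis
    unfolding vectors_unique_top_split
    using card_Un_disjoint[OF below(1) peaks(1) below_peak_disjoint] below peaks by simp
qed

lemma mon_dvd_xpow: "mon_dvd (xpow i k) a \<longleftrightarrow> k \<le> a i"
  by (auto simp: mon_dvd_def xpow_def)

lemma mon_dvd_xpow_times_xpow:
  assumes "i \<noteq> j"
  shows "mon_dvd (\<lambda>l. xpow i k l + xpow j k' l) a \<longleftrightarrow> k \<le> a i \<and> k' \<le> a j"
  using assms by (auto simp: mon_dvd_def xpow_def)

lemma standard_monomials_M1_gens_iff:
  "a \<in> standard_monomials n (M1_gens n) \<longleftrightarrow> a \<in> monomials n \<and> (\<forall>i\<in>{1..n}. a i < n)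
     \<and> (\<forall>i j. 1 \<le> i \<and> i < j \<and> j \<le> n \<longrightarrow> a i < n - 1 \<or> a j < n - 1)"
proof -
  have "(\<forall>g\<in>M1_gens n. P g) \<longleftrightarrow> (\<forall>i\<in>{1..n}. P (xpow i n))
     \<and> (\<forall>i j. 1 \<le> i \<and> i < j \<and> j \<le> n \<longrightarrow> P (\<lambda>l. xpow i (n - 1) l + xpow j (n - 1) l))"
    for P
    unfolding M1_gens_def by blast
  then show ?thesis
    by (simp add: standard_monomials_def mon_dvd_xpow mon_dvd_xpow_times_xpow not_le)
qed

lemma standard_monomials_M1_gens:
  assumes "n \<ge> 1"
  shows "standard_monomials n (M1_gens n) = vectors_unique_top {1..n} (n - 1)"
proof (intro set_eqI iffI)
  fix a assume "a \<in> standard_monomials n (M1_gens n)"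
  then have support: "a \<in> monomials n" and below: "\<forall>i\<in>{1..n}. a i < n"
    and distinct_tops: "\<forall>i j. 1 \<le> i \<and> i < j \<and> j \<le> n \<longrightarrow> a i < n - 1 \<or> a j < n - 1"
    unfolding standard_monomials_M1_gens_iff by auto
  have le: "\<forall>i\<in>{1..n}. a i \<le> n - 1"
  proof
    fix i assume "i \<in> {1..n}"
    with below have "a i < n" by blast
    then show "a i \<le> n - 1" by linarith
  qed
  have unique: "\<forall>i\<in>{1..n}. \<forall>j\<in>{1..n}. a i = n - 1 \<and> a j = n - 1 \<longrightarrow> i = j"
  proof (intro ballI impI)
    fix i j assume "i \<in> {1..n}" "j \<in> {1..n}" "a i = n - 1 \<and> a j = n - 1"
    then show "i = j"
      using distinct_tops[rule_format, of i j] distinct_tops[rule_format, of j i]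
      by (cases i j rule: linorder_cases) auto
  qed
  show "a \<in> vectors_unique_top {1..n} (n - 1)"
    using support le unique unfolding vectors_unique_top_def monomials_def mem_Collect_eq
    by (intro conjI)
next
  fix a assume "a \<in> vectors_unique_top {1..n} (n - 1)"
  then have "a \<in> monomials n" and le: "\<forall>i\<in>{1..n}. a i \<le> n - 1"
    and unique: "\<forall>i\<in>{1..n}. \<forall>j\<in>{1..n}. a i = n - 1 \<and> a j = n - 1 \<longrightarrow> i = j"
    unfolding vectors_unique_top_def monomials_def by blast+
  moreover have "\<forall>i\<in>{1..n}. a i < n"
    using le assms by fastforce
  moreover have "a i < n - 1 \<or> a j < n - 1" if "1 \<le> i" "i < j" "j \<le> n" for i j
  proof -
    have "i \<in> {1..n}" "j \<in> {1..n}" "i \<noteq> j" using that by auto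
    then have "\<not> (a i = n - 1 \<and> a j = n - 1)" "a i \<le> n - 1" "a j \<le> n - 1"
      using unique le by blast+
    then show ?thesis by linarith
  qed
  ultimately show "a \<in> standard_monomials n (M1_gens n)"
    unfolding standard_monomials_M1_gens_iff by blast
qed

theorem theorem3p2:
  fixes n :: nat
  assumes "n \<ge> 1"
  shows "finite (standard_monomials n (M1_gens n))
    \<and> card (standard_monomials n (M1_gens n)) = (2 * n - 1) * (n - 1) ^ (n - 1)"
proof -
  obtain m where n: "n = Suc m" using assms by (cases n) auto
  have "m ^ Suc m + Suc m * m ^ m = (2 * Suc m - 1) * m ^ m" by (simp add: algebra_simps)
  then show ?thesis
    using standard_monomials_M1_gens[OF assms] finite_card_vectors_unique_top[of "{1..n}" "n - 1"] n
    by simp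
qed

end
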